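(* For any compilation chain and any trace relation ${\sim} \subseteq \mathit{Trace}_S \times \mathit{Trace}_T$, with existential image $\tilde\tau$ and universal image $\tilde\sigma$, the following are equivalent: (i) $\mathit{TP}^{\tilde\tau}$: for all $\pi_S \subseteq \mathit{Trace}_S$ and all source programs $W$, $W \models \pi_S$ implies $W{\downarrow} \models \tilde\tau(\pi_S)$; (ii) $\mathit{CC}^{\sim}$; (iii) $\mathit{TP}^{\tilde\sigma}$: for all $\pi_T \subseteq \mathit{Trace}_T$ and all source programs $W$, $W \models \tilde\sigma(\pi_T)$ implies $W{\downarrow} \models \pi_T$.
   Context: A compilation chain consists of a set of source (whole) programs $W$, a set of target programs, a set $\mathit{Trace}_S$ of source traces and a set $\mathit{Trace}_T$ of target traces, a source semantics relation $W \rightsquigarrow s$ (program $W$ can produce trace $s$), a target semantics relation of the same kind, and a compiler mapping each source program $W$ to a target program $W{\downarrow}$. A trace property is a set of traces; a program $W$ satisfies $\pi$, written $W \models \pi$, iff every trace $W$ produces belongs to $\pi$. For a relation ${\sim}\subseteq \mathit{Trace}_S\times\mathit{Trace}_T$, its existential image is $\tilde\tau(\pi) = \{t \mid \exists s.\ s \sim t \wedge s \in \pi\}$ for $\pi \subseteq \mathit{Trace}_S$, and its universal image is $\tilde\sigma(\pi) = \{s \mid \forall t.\ s \sim t \Rightarrow t \in \pi\}$ for $\pi \subseteq \mathit{Trace}_T$. The criterion $\mathit{CC}^{\sim}$ states: for every source program $W$ and every $t \in \mathit{Trace}_T$, if $W{\downarrow} \rightsquigarrow t$ then there exists $s \in \mathit{Trace}_S$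 with $s \sim t$ and $W \rightsquigarrow s$. *)

theory Defs
  imports Main
begin

text \<open>A compilation chain is given by: source semantics semS :: 'w => 's => bool
(W produces trace s), target semantics semT :: 'v => 't => bool, and a compiler
cmp :: 'w => 'v.\<close>

definition sat :: "('p \<Rightarrow> 'tr \<Rightarrow> bool) \<Rightarrow> 'p \<Rightarrow> 'tr set \<Rightarrow> bool" where
  "sat sem W \<pi> \<longleftrightarrow> (\<forall>t. sem W t \<longrightarrow> t \<in> \<pi>)"

definition tau_img :: "('s \<Rightarrow> 't \<Rightarrow> bool) \<Rightarrow> 's set \<Rightarrow> 't set" where
  "tau_img rel \<pi> = {t. \<exists>s. rel s t \<and> s \<in> \<pi>}"

definition sigma_img :: "('s \<Rightarrow> 't \<Rightarrow> bool) \<Rightarrow> 't set \<Rightarrow> 's set" where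
  "sigma_img rel \<pi> = {s. \<forall>t. rel s t \<longrightarrow> t \<in> \<pi>}"

definition CC :: "('w \<Rightarrow> 's \<Rightarrow> bool) \<Rightarrow> ('v \<Rightarrow> 't \<Rightarrow> bool) \<Rightarrow> ('w \<Rightarrow> 'v)
    \<Rightarrow> ('s \<Rightarrow> 't \<Rightarrow> bool) \<Rightarrow> bool" where
  "CC semS semT cmp rel \<longleftrightarrow>
     (\<forall>W t. semT (cmp W) t \<longrightarrow> (\<exists>s. rel s t \<and> semS W s))"

definition TP_tau :: "('w \<Rightarrow> 's \<Rightarrow> bool) \<Rightarrow> ('v \<Rightarrow> 't \<Rightarrow> bool) \<Rightarrow> ('w \<Rightarrow> 'v)
    \<Rightarrow> ('s \<Rightarrow> 't \<Rightarrow> bool) \<Rightarrow> bool" where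
  "TP_tau semS semT cmp rel \<longleftrightarrow>
     (\<forall>\<pi>S W. sat semS W \<pi>S \<longrightarrow> sat semT (cmp W) (tau_img rel \<pi>S))"

definition TP_sigma :: "('w \<Rightarrow> 's \<Rightarrow> bool) \<Rightarrow> ('v \<Rightarrow> 't \<Rightarrow> bool) \<Rightarrow> ('w \<Rightarrow> 'v)
    \<Rightarrow> ('s \<Rightarrow> 't \<Rightarrow> bool) \<Rightarrow> bool" where
  "TP_sigma semS semT cmp rel \<longleftrightarrow>
     (\<forall>\<pi>T W. sat semS W (sigma_img rel \<pi>T) \<longrightarrow> sat semT (cmp W) \<pi>T)"

end

theory Submission
  imports Defs
begin

text \<open>The images form a Galois connection, \<open>tau_img rel \<pi>S \<subseteq> \<pi>T \<longleftrightarrow> \<pi>S \<subseteq> sigma_img rel \<pi>T\<close>,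
and a program satisfies a property iff its set of behaviours is contained in it. Hence
\<open>CC\<close>, which says that the behaviours of \<open>cmp W\<close> lie in the \<open>tau_img\<close> of the behaviours
of \<open>W\<close>, is \<open>TP_tau\<close> instantiated with the strongest property of \<open>W\<close>, its set of
behaviours; and \<open>TP_sigma\<close> is \<open>TP_tau\<close> read through the Galois connection.\<close>

definition behaviours :: "('p \<Rightarrow> 'tr \<Rightarrow> bool) \<Rightarrow> 'p \<Rightarrow> 'tr set" where
  "behaviours sem W = {t. sem W t}"

lemma sat_iff_behaviours_subset: "sat sem W \<pi> \<longleftrightarrow> behaviours sem W \<subseteq> \<pi>"
  by (auto simp: sat_def behaviours_def)

lemma tau_img_subset_iff_subset_sigma_img:
  "tau_img rel \<pi>S \<subseteq> \<pi>T \<longleftrightarrow> \<pi>S \<subseteq> sigma_img rel \<pi>T"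
  by (auto simp: tau_img_def sigma_img_def)

lemma tau_img_mono: "\<pi> \<subseteq> \<pi>' \<Longrightarrow> tau_img rel \<pi> \<subseteq> tau_img rel \<pi>'"
  by (auto simp: tau_img_def)

lemma CC_iff_behaviours_subset_tau_img:
  "CC semS semT cmp rel \<longleftrightarrow>
     (\<forall>W. behaviours semT (cmp W) \<subseteq> tau_img rel (behaviours semS W))"
  by (auto simp: CC_def behaviours_def tau_img_def)

lemma TP_tau_iff_CC: "TP_tau semS semT cmp rel \<longleftrightarrow> CC semS semT cmp rel"
  unfolding TP_tau_def CC_iff_behaviours_subset_tau_img sat_iff_behaviours_subset
  by (meson order_refl order_trans tau_img_mono)

lemma TP_sigma_iff_TP_tau: "TP_sigma semS semT cmp rel \<longleftrightarrow> TP_tau semS semT cmp rel"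
  unfolding TP_sigma_def TP_tau_def sat_iff_behaviours_subset
  by (metis order_refl order_trans tau_img_subset_iff_subset_sigma_img)

theorem theorem2p6:
  fixes semS :: "'w \<Rightarrow> 's \<Rightarrow> bool" and semT :: "'v \<Rightarrow> 't \<Rightarrow> bool"
    and cmp :: "'w \<Rightarrow> 'v" and rel :: "'s \<Rightarrow> 't \<Rightarrow> bool"
  shows "(TP_tau semS semT cmp rel \<longleftrightarrow> CC semS semT cmp rel)
       \<and> (CC semS semT cmp rel \<longleftrightarrow> TP_sigma semS semT cmp rel)"
  using TP_tau_iff_CC TP_sigma_iff_TP_tau by blast

end
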